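(* Fix $p \in (0,1)$ and $c>0$, and for $x>0$ let $\alpha_x := 1-p(1-e^{-cx})$ and $f(x) := (2\alpha_x)^{1/x}$. If $p \le \frac12$, then $f$ is strictly decreasing on $(0,\infty)$. If $p>\frac12$, then there exists $x_* \in (0,\infty)$ such that $f$ is strictly decreasing on $(0,x_*]$ and strictly increasing on $[x_*,\infty)$. *)

theory Defs
  imports Complex_Main
begin

definition alphaA :: "real \<Rightarrow> real \<Rightarrow> real \<Rightarrow> real" where
  "alphaA p c x = 1 - p * (1 - exp (- c * x))"

definition fA :: "real \<Rightarrow> real \<Rightarrow> real \<Rightarrow> real" where
  "fA p c x = (2 * alphaA p c x) powr (1 / x)"

end

theory Submission
  imports Defs "HOL-Real_Asymp.Real_Asymp"
begin

text \<open>
  Write \<open>fA p c x = exp (g x / x)\<close> with \<open>g x = ln (2 * alphaA p c x)\<close>. The derivative of the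
  chord slope \<open>g x / x\<close> is \<open>- (g x - x * g' x) / x\<^sup>2\<close>, minus the intercept of the tangent to \<open>g\<close>
  at \<open>x\<close> over \<open>x\<^sup>2\<close>. As \<open>g'' = p (1 - p) c\<^sup>2 exp (- c x) / \<alpha>\<^sub>x\<^sup>2 > 0\<close>, this intercept has
  derivative \<open>- x g'' x < 0\<close>, so it decreases strictly on \<open>[0, \<infinity>)\<close> from \<open>ln 2\<close> towards
  \<open>ln (2 (1 - p))\<close>. For \<open>p \<le> 1/2\<close> it stays positive (already \<open>g > 0 > g'\<close>), so \<open>f\<close> decreases;
  for \<open>p > 1/2\<close> its limit is negative and \<open>x\<^sub>*\<close> is its unique zero.
\<close>

lemma quotient_by_ident_decreasing:
  fixes g g' :: "real \<Rightarrow> real" and a b :: real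
  assumes "0 < a" "a < b"
    and deriv: "\<And>x. a \<le> x \<Longrightarrow> x \<le> b \<Longrightarrow> (g has_real_derivative g' x) (at x)"
    and intercept_pos: "\<And>x. a < x \<Longrightarrow> x < b \<Longrightarrow> x * g' x < g x"
  shows "g b / b < g a / a"
proof (rule DERIV_neg_imp_decreasing_open[OF \<open>a < b\<close>])
  have quotient_deriv:
    "((\<lambda>x. g x / x) has_real_derivative (x * g' x - g x) / x\<^sup>2) (at x)" if "a \<le> x" "x \<le> b" for x
  proof -
    have "((\<lambda>x. g x / x) has_real_derivative (g' x * x - g x * 1) / (x * x)) (at x)"
      using that \<open>0 < a\<close> by (intro DERIV_divide deriv DERIV_ident) auto
    then show ?thesis by (simp add: power2_eq_square mult.commute)
  qed
  show "continuous_on {a..b} (\<lambda>x. g x / x)"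
    using quotient_deriv by (blast intro: DERIV_atLeastAtMost_imp_continuous_on)
  fix x assume x: "a < x" "x < b"
  have "(x * g' x - g x) / x\<^sup>2 < 0"
    using intercept_pos[OF x] x \<open>0 < a\<close> by (intro divide_neg_pos) auto
  then show "\<exists>y. ((\<lambda>x. g x / x) has_real_derivative y) (at x) \<and> y < 0"
    using quotient_deriv[of x] x by (intro exI[of _ "(x * g' x - g x) / x\<^sup>2"]) auto
qed

lemma quotient_by_ident_increasing:
  fixes g g' :: "real \<Rightarrow> real" and a b :: real
  assumes "0 < a" "a < b"
    and "\<And>x. a \<le> x \<Longrightarrow> x \<le> b \<Longrightarrow> (g has_real_derivative g' x) (at x)"
    and "\<And>x. a < x \<Longrightarrow> x < b \<Longrightarrow> g x < x * g' x"
  shows "g a / a < g b / b"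
  using quotient_by_ident_decreasing[of a b "\<lambda>x. - g x" "\<lambda>x. - g' x"] assms
  by (auto intro: DERIV_minus)

lemma alphaA_eq: "alphaA p c x = (1 - p) + p * exp (- c * x)"
  unfolding alphaA_def by algebra

lemma alphaA_gt: "0 < p \<Longrightarrow> 1 - p < alphaA p c x"
  by (simp add: alphaA_eq)

lemma has_real_derivative_alphaA: "(alphaA p c has_real_derivative - p * c * exp (- c * x)) (at x)"
  unfolding alphaA_def[abs_def] by (rule derivative_eq_intros refl | simp)+

locale alphaA_params =
  fixes p c :: real
  assumes p_pos: "0 < p" and p_less_1: "p < 1" and c_pos: "0 < c"
begin

definition lg :: "real \<Rightarrow> real" where
  "lg x = ln (2 * alphaA p c x)"

definition lg' :: "real \<Rightarrow> real" where
  "lg' x = - p * c * exp (- c * x) / alphaA p c x"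

definition lg'' :: "real \<Rightarrow> real" where
  "lg'' x = p * (1 - p) * c\<^sup>2 * exp (- c * x) / (alphaA p c x)\<^sup>2"

definition tangent_intercept :: "real \<Rightarrow> real" where
  "tangent_intercept x = lg x - x * lg' x"

lemma alphaA_pos: "0 < alphaA p c x"
  using alphaA_gt[OF p_pos, of c x] p_less_1 by linarith

lemma fA_eq_exp: "0 < x \<Longrightarrow> fA p c x = exp (lg x / x)"
  unfolding fA_def lg_def powr_def using alphaA_pos[of x] by simp

lemma has_real_derivative_lg: "(lg has_real_derivative lg' x) (at x)"
proof -
  have "(lg has_real_derivative 1 / (2 * alphaA p c x) * (2 * (- p * c * exp (- c * x)))) (at x)"
    unfolding lg_def[abs_def] using alphaA_pos[of x]
    by (intro DERIV_ln_divide[THEN DERIV_chain2] DERIV_cmult has_real_derivative_alphaA) simp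
  then show ?thesis
    unfolding lg'_def using alphaA_pos[of x] by (simp add: field_simps)
qed

lemma has_real_derivative_lg':
  "(lg' has_real_derivative lg'' x) (at x)"
proof -
  have numerator_deriv:
    "((\<lambda>x. - p * c * exp (- c * x)) has_real_derivative - p * c * (exp (- c * x) * (- c))) (at x)"
    by (rule derivative_eq_intros refl | simp)+
  have "(lg' has_real_derivative
      (- p * c * (exp (- c * x) * (- c)) * alphaA p c x
        - (- p * c * exp (- c * x)) * (- p * c * exp (- c * x)))
      / (alphaA p c x * alphaA p c x)) (at x)"
    unfolding lg'_def[abs_def] using alphaA_pos[of x]
    by (intro DERIV_divide numerator_deriv has_real_derivative_alphaA) auto
  moreover have "- p * c * (exp (- c * x) * (- c)) * alphaA p c x
      - (- p * c * exp (- c * x)) * (- p * c * exp (- c * x))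
      = p * (1 - p) * c\<^sup>2 * exp (- c * x)"
    unfolding alphaA_eq by (simp add: algebra_simps power2_eq_square)
  ultimately show ?thesis by (simp add: lg''_def power2_eq_square)
qed

lemma lg''_pos: "0 < lg'' x"
  unfolding lg''_def using p_pos p_less_1 c_pos alphaA_pos[of x] by simp

lemma has_real_derivative_tangent_intercept:
  "(tangent_intercept has_real_derivative - x * lg'' x) (at x)"
proof -
  have "(tangent_intercept has_real_derivative lg' x - (1 * lg' x + lg'' x * x)) (at x)"
    unfolding tangent_intercept_def[abs_def]
    by (intro DERIV_diff DERIV_mult DERIV_ident has_real_derivative_lg has_real_derivative_lg')
  then show ?thesis by (simp add: mult.commute)
qed

lemma continuous_on_tangent_intercept: "continuous_on S tangent_intercept"
  using has_real_derivative_tangent_intercept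
  by (meson DERIV_isCont continuous_at_imp_continuous_on)

lemma tangent_intercept_strict_antimono: "strict_antimono_on {0..} tangent_intercept"
proof (rule monotone_onI)
  fix a b :: real assume "a \<in> {0..}" "b \<in> {0..}" "a < b"
  show "tangent_intercept b < tangent_intercept a"
  proof (rule DERIV_neg_imp_decreasing_open[OF \<open>a < b\<close>])
    show "continuous_on {a..b} tangent_intercept"
      by (rule continuous_on_tangent_intercept)
    fix x assume "a < x" "x < b"
    with \<open>a \<in> {0..}\<close> have "- x * lg'' x < 0"
      using lg''_pos[of x] by simp
    then show "\<exists>y. (tangent_intercept has_real_derivative y) (at x) \<and> y < 0"
      using has_real_derivative_tangent_intercept by blast
  qed
qed

lemma tangent_intercept_0: "tangent_intercept 0 = ln 2"
  unfolding tangent_intercept_def lg_def alphaA_def by simp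

lemma tangent_intercept_tendsto: "(tangent_intercept \<longlongrightarrow> ln (2 * (1 - p))) at_top"
proof -
  have exp_lim: "((\<lambda>x. exp (- c * x)) \<longlongrightarrow> 0) at_top"
    and x_exp_lim: "((\<lambda>x. x * exp (- c * x)) \<longlongrightarrow> 0) at_top"
    using c_pos by real_asymp+
  have alphaA_lim: "(alphaA p c \<longlongrightarrow> 1 - p) at_top"
    using tendsto_add[OF tendsto_const tendsto_mult[OF tendsto_const exp_lim], of "1 - p" p]
    by (simp add: alphaA_eq[abs_def])
  have "((\<lambda>x. ln (2 * alphaA p c x) + p * c * (x * exp (- c * x)) / alphaA p c x)
      \<longlongrightarrow> ln (2 * (1 - p)) + p * c * 0 / (1 - p)) at_top"
    using p_less_1 by (intro tendsto_intros alphaA_lim x_exp_lim) auto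
  moreover have "(\<lambda>x. ln (2 * alphaA p c x) + p * c * (x * exp (- c * x)) / alphaA p c x)
      = tangent_intercept"
    unfolding tangent_intercept_def[abs_def] lg_def lg'_def by (auto simp: field_simps)
  ultimately show ?thesis by simp
qed

lemma tangent_intercept_pos_if_le_half:
  assumes "p \<le> 1/2" "0 \<le> x"
  shows "0 < tangent_intercept x"
proof -
  have "1 < 2 * alphaA p c x"
    using alphaA_gt[OF p_pos, of c x] assms(1) by linarith
  then have "0 < lg x" unfolding lg_def by simp
  moreover have "lg' x < 0"
    unfolding lg'_def using alphaA_pos[of x] p_pos c_pos by (simp add: divide_neg_pos)
  then have "x * lg' x \<le> 0"
    using assms(2) by (intro mult_nonneg_nonpos) auto
  ultimately show ?thesis
    unfolding tangent_intercept_def by linarith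
qed

lemma tangent_intercept_root_if_gt_half:
  assumes "1/2 < p"
  obtains xs where "0 < xs" "tangent_intercept xs = 0"
proof -
  have "ln (2 * (1 - p)) < 0"
    using assms p_less_1 by simp
  then have "\<forall>\<^sub>F x in at_top. tangent_intercept x < 0"
    by (rule order_tendstoD(2)[OF tangent_intercept_tendsto])
  then obtain X0 where "\<And>x. X0 \<le> x \<Longrightarrow> tangent_intercept x < 0"
    by (auto simp: eventually_at_top_linorder)
  then have "0 < max X0 1" "tangent_intercept (max X0 1) < 0"
    by auto
  then obtain X where "0 < X" "tangent_intercept X < 0"
    by blast
  moreover have "continuous_on {0..X} tangent_intercept"
    by (rule continuous_on_tangent_intercept)
  ultimately obtain xs where "0 \<le> xs" "tangent_intercept xs = 0"
    using IVT2'[of tangent_intercept X 0 0] tangent_intercept_0 by force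
  moreover from this have "xs \<noteq> 0"
    using tangent_intercept_0 by auto
  ultimately show ?thesis
    by (intro that) auto
qed

lemma fA_decreasing:
  assumes "0 < a" "a < b" "\<And>x. a < x \<Longrightarrow> x < b \<Longrightarrow> 0 < tangent_intercept x"
  shows "fA p c b < fA p c a"
proof -
  have "lg b / b < lg a / a"
    using assms by (intro quotient_by_ident_decreasing[where g' = lg'] has_real_derivative_lg)
      (auto simp: tangent_intercept_def)
  then show ?thesis using assms fA_eq_exp by simp
qed

lemma fA_increasing:
  assumes "0 < a" "a < b" "\<And>x. a < x \<Longrightarrow> x < b \<Longrightarrow> tangent_intercept x < 0"
  shows "fA p c a < fA p c b"
proof -
  have "lg a / a < lg b / b"
    using assms by (intro quotient_by_ident_increasing[where g' = lg'] has_real_derivative_lg)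
      (auto simp: tangent_intercept_def)
  then show ?thesis using assms fA_eq_exp by simp
qed

end

theorem claimA3:
  fixes p c :: real
  assumes "0 < p" "p < 1" "0 < c"
  shows "(p \<le> 1/2 \<longrightarrow> strict_antimono_on {0<..} (fA p c))
       \<and> (p > 1/2 \<longrightarrow> (\<exists>xs > 0. strict_antimono_on {0<..xs} (fA p c)
                                   \<and> strict_mono_on {xs..} (fA p c)))"
proof -
  interpret alphaA_params p c using assms by unfold_locales
  have "strict_antimono_on {0<..} (fA p c)" if "p \<le> 1/2"
    using tangent_intercept_pos_if_le_half[OF that] fA_decreasing by (intro monotone_onI) auto
  moreover have "\<exists>xs > 0. strict_antimono_on {0<..xs} (fA p c) \<and> strict_mono_on {xs..} (fA p c)"
    if gt_half: "1/2 < p"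
  proof -
    obtain xs where xs: "0 < xs" "tangent_intercept xs = 0"
      using tangent_intercept_root_if_gt_half[OF gt_half] .
    have "0 < tangent_intercept x" if "0 \<le> x" "x < xs" for x
      using monotone_onD[OF tangent_intercept_strict_antimono, of x xs] xs that by auto
    moreover have "tangent_intercept x < 0" if "xs < x" for x
      using monotone_onD[OF tangent_intercept_strict_antimono, of xs x] xs that by auto
    ultimately show ?thesis
      using xs fA_decreasing fA_increasing by (intro exI[of _ xs] conjI monotone_onI) auto
  qed
  ultimately show ?thesis by blast
qed

end
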